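(* Let $q$ be odd, and for $a\in\mathbb{F}_{q^3}$ let $\operatorname{T}(a)=a+a^q+a^{q^2}$ and $\operatorname{N}(a)=a^{1+q+q^2}$ denote the trace and norm from $\mathbb{F}_{q^3}$ to $\mathbb{F}_q$. Then for arbitrary $\beta,\gamma\in\mathbb{F}_q$ there exists $s\in\mathbb{F}_{q^3}\setminus\mathbb{F}_q$ such that $$\operatorname{T}\big(s(s+\beta)\big)+\operatorname{N}(s)=-\gamma.$$ In particular, let $\alpha\in\overline{\mathbb{F}}_q$ be a root of unity of order $q^2+q+1$, let $$f_3(X)=(X-1)^2(X-\alpha)(X-\alpha^{-1})(X-\alpha^{q})(X-\alpha^{-q})(X-\alpha^{q+1})(X-\alpha^{-q-1}),$$ and let $D$ be the $8\times8$ matrix over $\mathbb{F}_{q^3}(t,s)$ (with $t,s$ indeterminates) $$D=\begin{pmatrix}-t&-(s^{1+q+q^2}+s^{q^2}t^q+t^{q^2}s)&s^{1+q}+t^q&-t^{q^2}&-s&s^{q^2}&1&0\\-1&0&0&0&0&0&0&0\\0&-(s^{q+q^2}+t^{q^2})&s^q&0&-1&0&0&0\\0&-s^{q^2}&1&0&0&0&0&0\\0&-t^q&0&s^q&0&1&0&0\\0&-s&0&-1&0&0&0&0\\0&-t&0&0&0&0&0&-1\\0&1&0&0&0&0&0&0\end{pmatrix};$$ then there is a specialization $t\mapsto t_0$, $s\mapsto s_0$ with $t_0,s_0\in\mathbb{F}_{q^3}$ under which the characteristic polynomial of $D$ becomes $f_3$. *)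

theory Defs
  imports "Jordan_Normal_Form.Char_Poly"
begin

text \<open>The field F_{q^3} is modelled as a finite field type 'a with CARD('a) = q^3;
  the subfield F_q is the set of elements x with x^q = x.\<close>

definition Tr3 :: "nat \<Rightarrow> 'a::field \<Rightarrow> 'a" where
  "Tr3 q a = a + a ^ q + a ^ (q ^ 2)"

definition Nm3 :: "nat \<Rightarrow> 'a::field \<Rightarrow> 'a" where
  "Nm3 q a = a ^ (1 + q + q ^ 2)"

definition f3 :: "nat \<Rightarrow> 'a::field \<Rightarrow> 'a poly" where
  "f3 q \<alpha> = [:-1, 1:] ^ 2 * [:- \<alpha>, 1:] * [:- inverse \<alpha>, 1:]
      * [:- (\<alpha> ^ q), 1:] * [:- inverse (\<alpha> ^ q), 1:]
      * [:- (\<alpha> ^ (q + 1)), 1:] * [:- inverse (\<alpha> ^ (q + 1)), 1:]"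

text \<open>The 8x8 matrix D with the indeterminates t, s specialised to t0, s0.\<close>
definition Dmat :: "nat \<Rightarrow> 'a::field \<Rightarrow> 'a \<Rightarrow> 'a mat" where
  "Dmat q t s = mat_of_rows_list 8
    [[- t, - (s ^ (1 + q + q ^ 2) + s ^ (q ^ 2) * t ^ q + t ^ (q ^ 2) * s),
          s ^ (1 + q) + t ^ q, - (t ^ (q ^ 2)), - s, s ^ (q ^ 2), 1, 0],
     [-1, 0, 0, 0, 0, 0, 0, 0],
     [0, - (s ^ (q + q ^ 2) + t ^ (q ^ 2)), s ^ q, 0, -1, 0, 0, 0],
     [0, - (s ^ (q ^ 2)), 1, 0, 0, 0, 0, 0],
     [0, - (t ^ q), 0, s ^ q, 0, 1, 0, 0],
     [0, - s, 0, -1, 0, 0, 0, 0],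
     [0, - t, 0, 0, 0, 0, 0, -1],
     [0, 1, 0, 0, 0, 0, 0, 0]]"

end

(*
  An element s of F_{q^3} outside F_q has minimal polynomial x^3 - a x^2 + e x - c over F_q, with
  T(s(s + \<beta>)) + N(s) = a^2 - 2e + \<beta> a + c. Conjugacy classes outside F_q are in bijection with
  the (q^3 - q)/3 monic cubics over F_q without roots in F_q, so it suffices to make
  x^3 - a x^2 + e x - (2e - a^2 - \<beta> a - \<gamma>) rootless. Its value at 2 does not depend on e, and
  any other root determines e, so for suitable a only q - 1 values of e are excluded.

  Specialising t to s^q + u with u in F_q turns the characteristic polynomial of D into a palindromic
  octic depending only on u and T(s(s + u)) + N(s). The polynomial f_3 is a palindromic octic of the
  same shape, determined by the elementary symmetric functions of the conjugates of \<alpha>; the first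
  part provides an s that matches it.
*)
theory Submission
  imports Defs "HOL-Number_Theory.Cong"
begin

section \<open>Finite rings of prime characteristic\<close>

definition add_closed :: "'a::ring_1 set \<Rightarrow> bool" where
  "add_closed V \<longleftrightarrow> 0 \<in> V \<and> (\<forall>x\<in>V. \<forall>y\<in>V. x + y \<in> V)"

lemma add_closed_of_nat_mult:
  "add_closed V \<Longrightarrow> v \<in> V \<Longrightarrow> of_nat k * v \<in> V"
  by (induction k) (auto simp: add_closed_def distrib_right)

lemma add_closed_uminus:
  assumes "prime CHAR('a::ring_1)" "add_closed V" "(v::'a) \<in> V"
  shows "- v \<in> V"
proof -
  have "of_nat (CHAR('a) - 1) * v = - v"
    using prime_ge_1_nat[OF assms(1)] by (simp add: of_nat_diff)
  with add_closed_of_nat_mult[OF assms(2,3)] show ?thesis by metis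
qed

lemma add_closed_extend:
  fixes V :: "'a::ring_1 set"
  assumes p: "prime CHAR('a)" and V: "add_closed V" "finite V" and x: "x \<notin> V"
  defines "W \<equiv> (\<lambda>(c, v). of_nat c * x + v) ` ({..<CHAR('a)} \<times> V)"
  shows "add_closed W" and "card W = CHAR('a) * card V"
proof -
  let ?p = "CHAR('a)"
  have p0: "?p > 0" using p prime_gt_0_nat by blast
  have of_nat_mod: "of_nat (n mod ?p) = (of_nat n :: 'a)" for n
    by (simp add: of_nat_eq_iff_cong_CHAR cong_def)
  show "add_closed W" unfolding add_closed_def
  proof (intro conjI ballI)
    show "0 \<in> W" using V p0 unfolding W_def add_closed_def by (force intro: image_eqI[of _ _ "(0, 0)"])
  next
    fix a b assume "a \<in> W" "b \<in> W"
    then obtain c v d w where cv: "c < ?p" "v \<in> V" "a = of_nat c * x + v"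
      and dw: "d < ?p" "w \<in> V" "b = of_nat d * x + w" unfolding W_def by auto
    have "a + b = of_nat ((c + d) mod ?p) * x + (v + w)"
      unfolding cv dw of_nat_mod by (simp add: algebra_simps)
    moreover have "v + w \<in> V" using V cv dw unfolding add_closed_def by auto
    ultimately show "a + b \<in> W" unfolding W_def using p0 by force
  qed
  have no_multiple: "c = d" if "c < ?p" "d < ?p" "c \<le> d" "v \<in> V" "w \<in> V"
    "of_nat c * x + v = of_nat d * x + w" for c d v w
  proof (rule ccontr)
    assume "c \<noteq> d"
    then have "coprime (d - c) ?p"
      using that p by (auto simp: coprime_commute intro!: prime_imp_coprime dest: dvd_imp_le)
    then obtain m where "[(d - c) * m = Suc 0] (mod ?p)" using cong_solve_coprime_nat by blast
    then have inv: "of_nat m * of_nat (d - c) = (1::'a)"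
      by (metis of_nat_1 One_nat_def of_nat_eq_iff_cong_CHAR of_nat_mult mult.commute)
    have "of_nat (d - c) * x = v + - w" using that by (simp add: of_nat_diff algebra_simps)
    also have "\<dots> \<in> V" using V add_closed_uminus[OF p V(1) that(5)] that(4) unfolding add_closed_def by auto
    finally have "of_nat m * (of_nat (d - c) * x) \<in> V" by (rule add_closed_of_nat_mult[OF V(1)])
    then show False using x inv by (simp flip: mult.assoc)
  qed
  have "inj_on (\<lambda>(c, v). of_nat c * x + v) ({..<?p} \<times> V)"
  proof (rule inj_onI, clarsimp)
    fix c v d w assume h: "c < ?p" "v \<in> V" "d < ?p" "w \<in> V" "of_nat c * x + v = of_nat d * x + w"
    then have "c = d" using no_multiple[of c d v w] no_multiple[of d c w v] by (cases "c \<le> d") auto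
    then show "c = d \<and> v = w" using h by simp
  qed
  then show "card W = ?p * card V"
    unfolding W_def by (simp add: card_image card_cartesian_product)
qed

lemma card_UNIV_CHAR_power:
  assumes fin: "finite (UNIV :: 'a::ring_1 set)" and p: "prime CHAR('a)"
  shows "\<exists>n. card (UNIV :: 'a set) = CHAR('a) ^ n"
proof -
  have "\<exists>n. card (UNIV :: 'a set) = CHAR('a) ^ n"
    if "add_closed V" "card V = CHAR('a) ^ k" for V :: "'a set" and k
    using that
  proof (induction "card (UNIV :: 'a set) - card V" arbitrary: V k rule: less_induct)
    case less
    show ?case
    proof (cases "V = UNIV")
      case False
      then obtain x where x: "x \<notin> V" by auto
      define W where "W = (\<lambda>(c, v). of_nat c * x + v) ` ({..<CHAR('a)} \<times> V)"
      have finV: "finite V" using fin by (rule finite_subset[rotated]) simp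
      have W: "add_closed W" "card W = CHAR('a) * card V"
        using add_closed_extend[OF p less.prems(1) finV x] unfolding W_def by auto
      have "card V < card W"
        using W(2) less.prems(2) prime_ge_2_nat[OF p] by simp
      moreover have "card W \<le> card (UNIV :: 'a set)" using fin by (rule card_mono) simp
      ultimately have "card (UNIV :: 'a set) - card W < card (UNIV :: 'a set) - card V" by linarith
      from less.hyps[OF this W(1), of "Suc k"] show ?thesis using W(2) less.prems(2) by simp
    qed (use less.prems in auto)
  qed
  from this[of "{0}" 0] show ?thesis by (simp add: add_closed_def)
qed

lemma finite_field_nonzero_pow_card_minus_1:
  fixes x :: "'a::{finite,field}"
  assumes "x \<noteq> 0"
  shows "x ^ (card (UNIV :: 'a set) - 1) = 1"
proof -
  let ?U = "UNIV - {0::'a}"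
  have "bij_betw ((*) x) ?U ?U"
    using assms by (intro bij_betwI[of _ _ _ "\<lambda>y. y / x"]) auto
  then have "(\<Prod>y\<in>?U. x * y) = \<Prod>?U" using prod.reindex_bij_betw[of _ ?U ?U "\<lambda>y. y"] by simp
  moreover have "(\<Prod>y\<in>?U. x * y) = x ^ (card (UNIV :: 'a set) - 1) * \<Prod>?U"
    by (simp add: prod.distrib card_Diff_singleton)
  moreover have "\<Prod>?U \<noteq> 0" by simp
  ultimately show ?thesis by simp
qed

lemma finite_field_pow_card:
  fixes x :: "'a::{finite,field}"
  shows "x ^ card (UNIV :: 'a set) = x"
proof (cases "x = 0")
  case False
  have "x ^ card (UNIV :: 'a set) = x * x ^ (card (UNIV :: 'a set) - 1)"
    using finite_UNIV_card_ge_0[where 'a = 'a] by (simp flip: power_Suc)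
  then show ?thesis using finite_field_nonzero_pow_card_minus_1[OF False] by simp
qed (simp add: finite_UNIV_card_ge_0)

section \<open>Monic cubics over a finite subring\<close>

definition cubic :: "'a::comm_ring_1 \<times> 'a \<times> 'a \<Rightarrow> 'a \<Rightarrow> 'a" where
  "cubic e x = x ^ 3 - fst e * x ^ 2 + fst (snd e) * x - snd (snd e)"

definition elem_sym3 :: "'a::comm_ring_1 \<Rightarrow> 'a \<Rightarrow> 'a \<Rightarrow> 'a \<times> 'a \<times> 'a" where
  "elem_sym3 x y z = (x + y + z, x * y + y * z + z * x, x * y * z)"

lemma cubic_elem_sym3: "cubic (elem_sym3 x y z) w = (w - x) * (w - y) * (w - z)"
  unfolding cubic_def elem_sym3_def by (simp add: algebra_simps power2_eq_square power3_eq_cube)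

lemma cubic_eq_elem_sym3_two_roots:
  fixes x y :: "'a::idom"
  assumes "x \<noteq> y" "cubic e x = 0" "cubic e y = 0"
  shows "e = elem_sym3 x y (fst e - x - y)"
proof -
  obtain a b c where e: "e = (a, b, c)" by (cases e) auto
  have "(x - y) * (b - (a * (x + y) - x\<^sup>2 - x * y - y\<^sup>2)) = cubic e x - cubic e y"
    unfolding cubic_def e by (simp add: algebra_simps power2_eq_square power3_eq_cube)
  then have b: "b = a * (x + y) - x\<^sup>2 - x * y - y\<^sup>2"
    using assms by simp
  have c: "c = x ^ 3 - a * x\<^sup>2 + b * x"
    using assms(2) unfolding cubic_def e by (simp add: algebra_simps)
  show ?thesis
    unfolding e elem_sym3_def c b by (simp add: algebra_simps power2_eq_square power3_eq_cube)
qed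

lemma cubic_eq_elem_sym3:
  fixes x y z :: "'a::idom"
  assumes "distinct [x, y, z]" "cubic e x = 0" "cubic e y = 0" "cubic e z = 0"
  shows "e = elem_sym3 x y z"
proof -
  have e: "e = elem_sym3 x y (fst e - x - y)"
    using assms by (intro cubic_eq_elem_sym3_two_roots) auto
  then have "(z - x) * (z - y) * (z - (fst e - x - y)) = 0"
    using assms(4) by (metis cubic_elem_sym3)
  then have "z = fst e - x - y" using assms(1) by auto
  then show ?thesis using e by simp
qed

definition distinct_pairs :: "'b set \<Rightarrow> ('b \<times> 'b) set" where
  "distinct_pairs A = {(x, y). x \<in> A \<and> y \<in> A \<and> x \<noteq> y}"

definition distinct_triples :: "'b set \<Rightarrow> (('b \<times> 'b) \<times> 'b) set" where
  "distinct_triples A = {((x, y), z). x \<in> A \<and> y \<in> A \<and> z \<in> A \<and> distinct [x, y, z]}"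

lemma finite_distinct_pairs: "finite A \<Longrightarrow> finite (distinct_pairs A)"
  unfolding distinct_pairs_def by (rule finite_subset[of _ "A \<times> A"]) auto

lemma finite_distinct_triples: "finite A \<Longrightarrow> finite (distinct_triples A)"
  unfolding distinct_triples_def by (rule finite_subset[of _ "(A \<times> A) \<times> A"]) auto

lemma card_distinct_pairs:
  assumes "finite A" shows "card (distinct_pairs A) = card A * card A - card A"
proof -
  have "distinct_pairs A = A \<times> A - (\<lambda>x. (x, x)) ` A" unfolding distinct_pairs_def by auto
  moreover have "card ((\<lambda>x. (x, x)) ` A) = card A" by (rule card_image) (auto simp: inj_on_def)
  ultimately show ?thesis using assms
    by (simp add: card_Diff_subset card_cartesian_product image_subset_iff)
qed

lemma card_distinct_triples:
  assumes "finite A"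
  shows "card (distinct_triples A) = (card A * card A - card A) * (card A - 2)"
proof -
  have "distinct_triples A = Sigma (distinct_pairs A) (\<lambda>(x, y). A - {x, y})"
    unfolding distinct_pairs_def distinct_triples_def by auto
  then have "card (distinct_triples A) = (\<Sum>(x, y)\<in>distinct_pairs A. card (A - {x, y}))"
    using assms by (simp add: card_SigmaI finite_distinct_pairs split_def)
  also have "\<dots> = (\<Sum>_\<in>distinct_pairs A. card A - 2)"
    using assms by (intro sum.cong) (auto simp: distinct_pairs_def card_Diff_subset)
  finally show ?thesis using card_distinct_pairs[OF assms] by simp
qed

lemma sum_card_eq_card_if_image_Sigma:
  assumes "finite A" "\<And>a. a \<in> A \<Longrightarrow> finite (B a)" "inj_on f S" "f ` S = Sigma A B"
  shows "(\<Sum>a\<in>A. card (B a)) = card S"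
proof -
  have "(\<Sum>a\<in>A. card (B a)) = card (Sigma A B)" using assms(1,2) by (simp add: card_SigmaI)
  also have "\<dots> = card S" using card_image[OF assms(3)] assms(4) by simp
  finally show ?thesis .
qed

locale finite_subring =
  fixes K :: "'a::idom set"
  assumes finite: "finite K"
    and zero: "0 \<in> K" and one: "1 \<in> K"
    and add: "x \<in> K \<Longrightarrow> y \<in> K \<Longrightarrow> x + y \<in> K"
    and mult: "x \<in> K \<Longrightarrow> y \<in> K \<Longrightarrow> x * y \<in> K"
    and uminus: "x \<in> K \<Longrightarrow> - x \<in> K"
begin

lemma diff: "x \<in> K \<Longrightarrow> y \<in> K \<Longrightarrow> x - y \<in> K"
  using add uminus by (metis diff_conv_add_uminus)

lemma power: "x \<in> K \<Longrightarrow> x ^ n \<in> K"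
  by (induction n) (auto intro: mult one)

lemma of_nat: "of_nat n \<in> K"
  by (induction n) (auto intro: add zero one)

lemma numeral: "numeral n \<in> K"
  using of_nat[of "numeral n"] by simp

lemma elem_sym3_closed: "x \<in> K \<Longrightarrow> y \<in> K \<Longrightarrow> z \<in> K \<Longrightarrow> elem_sym3 x y z \<in> K \<times> K \<times> K"
  unfolding elem_sym3_def by (auto intro!: add mult)

definition cubic_roots :: "'a \<times> 'a \<times> 'a \<Rightarrow> 'a set" where
  "cubic_roots e = {x \<in> K. cubic e x = 0}"

definition rootless_cubics :: "('a \<times> 'a \<times> 'a) set" where
  "rootless_cubics = {e \<in> K \<times> K \<times> K. cubic_roots e = {}}"

lemma finite_cubic_roots: "finite (cubic_roots e)"
  unfolding cubic_roots_def using finite by simp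

lemma sum_card_cubic_roots: "(\<Sum>e\<in>K \<times> K \<times> K. card (cubic_roots e)) = card K ^ 3"
proof -
  let ?f = "\<lambda>(x, a, b). ((a, b, x ^ 3 - a * x\<^sup>2 + b * x), x)"
  have "(\<Sum>e\<in>K \<times> K \<times> K. card (cubic_roots e)) = card (K \<times> K \<times> K)"
  proof (rule sum_card_eq_card_if_image_Sigma)
    show "?f ` (K \<times> K \<times> K) = Sigma (K \<times> K \<times> K) cubic_roots"
    proof (intro equalityI subsetI)
      fix p assume "p \<in> Sigma (K \<times> K \<times> K) cubic_roots"
      then obtain a b c x where "p = ((a, b, c), x)" "a \<in> K" "b \<in> K" "x \<in> K"
        "c = x ^ 3 - a * x\<^sup>2 + b * x"
        by (auto simp: cubic_roots_def cubic_def algebra_simps)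
      then show "p \<in> ?f ` (K \<times> K \<times> K)" by (auto intro!: image_eqI[of _ _ "(x, a, b)"])
    qed (auto simp: cubic_roots_def cubic_def intro!: add mult diff power)
  qed (auto simp: inj_on_def finite finite_cubic_roots)
  then show ?thesis using finite by (simp add: card_cartesian_product power3_eq_cube)
qed

lemma sum_card_cubic_root_pairs:
  "(\<Sum>e\<in>K \<times> K \<times> K. card (distinct_pairs (cubic_roots e))) = (card K * card K - card K) * card K"
proof -
  let ?f = "\<lambda>((x, y), z). (elem_sym3 x y z, (x, y))"
  have "(\<Sum>e\<in>K \<times> K \<times> K. card (distinct_pairs (cubic_roots e))) = card (distinct_pairs K \<times> K)"
  proof (rule sum_card_eq_card_if_image_Sigma)
    show "?f ` (distinct_pairs K \<times> K) = Sigma (K \<times> K \<times> K) (\<lambda>e. distinct_pairs (cubic_roots e))"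
    proof (intro equalityI subsetI)
      fix p assume "p \<in> Sigma (K \<times> K \<times> K) (\<lambda>e. distinct_pairs (cubic_roots e))"
      then obtain e x y where p: "p = (e, (x, y))" "e \<in> K \<times> K \<times> K" "x \<in> K" "y \<in> K" "x \<noteq> y"
        "cubic e x = 0" "cubic e y = 0"
        by (auto simp: distinct_pairs_def cubic_roots_def)
      moreover have "fst e - x - y \<in> K" using p by (auto intro!: diff)
      ultimately have "e = elem_sym3 x y (fst e - x - y)" "fst e - x - y \<in> K"
        by (auto intro: cubic_eq_elem_sym3_two_roots)
      then show "p \<in> ?f ` (distinct_pairs K \<times> K)"
        using p by (auto simp: distinct_pairs_def intro!: image_eqI[of _ _ "((x, y), fst e - x - y)"])
    qed (force simp: distinct_pairs_def cubic_roots_def cubic_elem_sym3 elem_sym3_closed)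
  qed (auto simp: inj_on_def elem_sym3_def finite finite_cubic_roots finite_distinct_pairs)
  then show ?thesis using finite by (simp add: card_cartesian_product card_distinct_pairs)
qed

lemma sum_card_cubic_root_triples:
  "(\<Sum>e\<in>K \<times> K \<times> K. card (distinct_triples (cubic_roots e))) = card (distinct_triples K)"
proof (rule sum_card_eq_card_if_image_Sigma)
  let ?f = "\<lambda>((x, y), z). (elem_sym3 x y z, ((x, y), z))"
  show "?f ` distinct_triples K = Sigma (K \<times> K \<times> K) (\<lambda>e. distinct_triples (cubic_roots e))"
  proof (intro equalityI subsetI)
    fix p assume "p \<in> Sigma (K \<times> K \<times> K) (\<lambda>e. distinct_triples (cubic_roots e))"
    then obtain e x y z where p: "p = (e, ((x, y), z))" "x \<in> K" "y \<in> K" "z \<in> K"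
      "distinct [x, y, z]" "cubic e x = 0" "cubic e y = 0" "cubic e z = 0"
      by (auto simp: distinct_triples_def cubic_roots_def)
    then show "p \<in> ?f ` distinct_triples K"
      using cubic_eq_elem_sym3[of x y z e]
      by (auto simp: distinct_triples_def intro!: image_eqI[of _ _ "((x, y), z)"])
  qed (force simp: distinct_triples_def cubic_roots_def cubic_elem_sym3 elem_sym3_closed)
  show "inj_on ?f (distinct_triples K)" by (auto simp: inj_on_def)
qed (auto simp: finite finite_cubic_roots finite_distinct_triples)

lemma card_cubic_roots_le_3: "card (cubic_roots e) \<le> 3"
proof (rule ccontr)
  assume many: "\<not> card (cubic_roots e) \<le> 3"
  then have "distinct_triples (cubic_roots e) \<noteq> {}"
    using card_distinct_triples[OF finite_cubic_roots, of e] by (auto simp: mult_le_cancel1)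
  then obtain x y z where xyz: "x \<in> cubic_roots e" "y \<in> cubic_roots e" "z \<in> cubic_roots e"
    "distinct [x, y, z]"
    unfolding distinct_triples_def by auto
  then have "e = elem_sym3 x y z" by (intro cubic_eq_elem_sym3) (auto simp: cubic_roots_def)
  then have "cubic_roots e \<subseteq> {x, y, z}" by (auto simp: cubic_roots_def cubic_elem_sym3)
  then have "card (cubic_roots e) \<le> card {x, y, z}" by (rule card_mono[rotated]) simp
  also have "\<dots> \<le> 3" by (simp add: card_insert_le_m1)
  finally show False using many by simp
qed

text \<open>Inclusion-exclusion over the roots: for a set of \<open>r \<le> 3\<close> roots,
  \<open>6 [r = 0] = 6 - 6 r + 3 r (r - 1) - r (r - 1) (r - 2)\<close>.\<close>
lemma card_rootless_cubics: "3 * card rootless_cubics = card K ^ 3 - card K"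
proof -
  define k where "k = card K"
  let ?r = "\<lambda>e. int (card (cubic_roots e))"
  have indicator: "int (6 * (if cubic_roots e = {} then 1 else 0)) =
     6 - 6 * ?r e + 3 * int (card (distinct_pairs (cubic_roots e)))
       - int (card (distinct_triples (cubic_roots e)))" for e
  proof -
    have "card (cubic_roots e) \<in> {0, 1, 2, 3}" using card_cubic_roots_le_3[of e] by auto
    then show ?thesis using finite_cubic_roots[of e]
      by (auto simp: card_distinct_pairs card_distinct_triples)
  qed
  have "card rootless_cubics = (\<Sum>e\<in>K \<times> K \<times> K. if cubic_roots e = {} then 1 else 0)"
    unfolding rootless_cubics_def using finite by (simp add: sum.If_cases Int_def)
  then have "int (6 * card rootless_cubics) =
      (\<Sum>e\<in>K \<times> K \<times> K. int (6 * (if cubic_roots e = {} then 1 else 0)))"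
    by (simp add: sum_distrib_left)
  also have "\<dots> = 6 * int (card (K \<times> K \<times> K)) - 6 * int (\<Sum>e\<in>K \<times> K \<times> K. card (cubic_roots e))
      + 3 * int (\<Sum>e\<in>K \<times> K \<times> K. card (distinct_pairs (cubic_roots e)))
      - int (\<Sum>e\<in>K \<times> K \<times> K. card (distinct_triples (cubic_roots e)))"
    unfolding indicator by (simp add: sum.distrib sum_subtractf sum_distrib_left)
  also have "\<dots> = 3 * int ((k * k - k) * k) - int ((k * k - k) * (k - 2))"
    unfolding sum_card_cubic_roots sum_card_cubic_root_pairs sum_card_cubic_root_triples
      card_distinct_triples[OF finite] k_def by (simp add: card_cartesian_product power3_eq_cube)
  also have "\<dots> = 2 * (int k ^ 3 - int k)"
  proof (cases "k \<ge> 2")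
    case True
    then have "int (k * k - k) = int k * int k - int k" "int (k - 2) = int k - 2"
      by (simp_all add: of_nat_diff)
    then show ?thesis unfolding of_nat_mult by (simp add: algebra_simps power3_eq_cube)
  next
    case False
    then have "k = 0 \<or> k = 1" by auto
    then show ?thesis by auto
  qed
  moreover have "k \<le> k ^ 3" by (cases k) (simp_all add: power3_eq_cube)
  ultimately have "int (3 * card rootless_cubics) = int (k ^ 3 - k)" by (simp add: of_nat_diff)
  then show ?thesis unfolding k_def by (simp only: of_nat_eq_iff)
qed

end

lemma quadratic_nonroot_among_0_1_neg1:
  fixes b c :: "'a::comm_ring_1"
  assumes "(2::'a) \<noteq> 0"
  shows "\<exists>a\<in>{0, 1, -1}. a\<^sup>2 + b * a + c \<noteq> 0"
proof (rule ccontr)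
  assume "\<not> ?thesis"
  then have "(1\<^sup>2 + b * 1 + c) + ((-1)\<^sup>2 + b * (-1) + c) - 2 * (0\<^sup>2 + b * 0 + c) = (0::'a)"
    by auto
  then show False using assms by (simp add: algebra_simps)
qed

section \<open>The field with \<open>q\<^sup>3\<close> elements\<close>

locale field_q3 =
  fixes q :: nat
  assumes card_UNIV: "card (UNIV :: 'a::{finite,field} set) = q ^ 3"
    and odd_q: "odd q"
begin

definition frob :: "'a \<Rightarrow> 'a" where
  "frob x = x ^ q"

definition Fq :: "'a set" where
  "Fq = {x. frob x = x}"

lemma q_ge_3: "q \<ge> 3"
proof -
  have "q \<noteq> 1"
  proof
    assume "q = 1"
    then have "card (UNIV :: 'a set) = 1" using card_UNIV by simp
    then show False by (metis card_1_singletonE UNIV_I singletonD zero_neq_one)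
  qed
  moreover have "q \<noteq> 0" "q \<noteq> 2" using odd_q odd_pos by auto
  ultimately show ?thesis by linarith
qed

lemma prime_CHAR: "prime CHAR('a)"
  using finite_imp_CHAR_pos[OF finite_UNIV] prime_CHAR_semidom by blast

lemma q_CHAR_power: "\<exists>k. q = CHAR('a) ^ k"
proof -
  obtain n where "card (UNIV :: 'a set) = CHAR('a) ^ n"
    using card_UNIV_CHAR_power[OF finite_UNIV prime_CHAR] by blast
  then have "q dvd CHAR('a) ^ n" using card_UNIV by (metis dvd_triv_left power3_eq_cube mult.assoc)
  then obtain k where "normalize q = CHAR('a) ^ k" using divides_primepow[OF prime_CHAR] by metis
  then show ?thesis by auto
qed

lemma frob_add: "frob (x + y) = frob x + frob y"
  using q_CHAR_power freshmans_dream'[OF prime_CHAR] unfolding frob_def by blast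

lemma frob_mult: "frob (x * y) = frob x * frob y"
  unfolding frob_def by (simp add: power_mult_distrib)

lemma frob_uminus: "frob (- x) = - frob x"
  unfolding frob_def using odd_q by simp

lemma frob_0 [simp]: "frob 0 = 0" and frob_1 [simp]: "frob 1 = 1"
  unfolding frob_def using q_ge_3 by simp_all

lemma frob_frob_frob [simp]: "frob (frob (frob x)) = x"
  unfolding frob_def using finite_field_pow_card[of x] card_UNIV
  by (simp flip: power_mult add: power3_eq_cube mult.assoc)

lemma frob_inject [simp]: "frob x = frob y \<longleftrightarrow> x = y"
  by (metis frob_frob_frob)

lemma power_q_squared: "x ^ q\<^sup>2 = frob (frob x)"
  unfolding frob_def by (simp add: power2_eq_square power_mult)

lemma Tr3_frob: "Tr3 q x = x + frob x + frob (frob x)"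
  unfolding Tr3_def power_q_squared by (simp add: frob_def)

lemma Nm3_frob: "Nm3 q x = x * frob x * frob (frob x)"
  unfolding Nm3_def power_add power_q_squared by (simp add: frob_def)

lemma two_neq_zero: "(2::'a) \<noteq> 0"
proof
  assume "(2::'a) = 0"
  then have "CHAR('a) dvd 2" by (metis of_nat_eq_0_iff_char_dvd of_nat_numeral)
  then have "CHAR('a) \<le> 2" by (rule dvd_imp_le) simp
  moreover have "CHAR('a) \<ge> 2" by (rule prime_ge_2_nat[OF prime_CHAR])
  ultimately obtain k where "q = 2 ^ k" using q_CHAR_power by auto
  moreover from this have "k = 0" using odd_q by (cases k) auto
  ultimately show False using q_ge_3 by simp
qed

sublocale Fq: finite_subring Fq
  by unfold_locales (auto simp: Fq_def frob_add frob_mult frob_uminus)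

lemma card_Fq_le: "card Fq \<le> q"
proof -
  let ?P = "monom (1::'a) q - [:0, 1:]"
  have "degree (monom (1::'a) q + - [:0, 1:]) = q"
    using q_ge_3 by (subst degree_add_eq_left) (simp_all add: degree_monom_eq)
  then have "degree ?P = q" by (simp only: diff_conv_add_uminus)
  moreover have "?P \<noteq> 0" using \<open>degree ?P = q\<close> q_ge_3 by auto
  ultimately have "card {x. poly ?P x = 0} \<le> q" using card_poly_roots_bound[of ?P] by simp
  moreover have "{x. poly ?P x = 0} = Fq" by (auto simp: Fq_def frob_def poly_monom)
  ultimately show ?thesis by simp
qed

definition conj_coeffs :: "'a \<Rightarrow> 'a \<times> 'a \<times> 'a" where
  "conj_coeffs s = elem_sym3 s (frob s) (frob (frob s))"

lemma conj_coeffs_in_Fq: "conj_coeffs s \<in> Fq \<times> Fq \<times> Fq"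
proof -
  let ?s1 = "frob s" and ?s2 = "frob (frob s)"
  have "frob (s + ?s1 + ?s2) = s + ?s1 + ?s2"
    "frob (s * ?s1 + ?s1 * ?s2 + ?s2 * s) = s * ?s1 + ?s1 * ?s2 + ?s2 * s"
    "frob (s * ?s1 * ?s2) = s * ?s1 * ?s2"
    by (simp_all only: frob_add frob_mult frob_frob_frob) (simp_all add: ac_simps)
  then show ?thesis by (simp add: conj_coeffs_def elem_sym3_def Fq_def)
qed

lemma conj_coeffs_frob: "conj_coeffs (frob s) = conj_coeffs s"
  unfolding conj_coeffs_def elem_sym3_def frob_frob_frob by (simp add: ac_simps)

lemma conjugates_notin_Fq:
  assumes "s \<notin> Fq"
  shows "frob s \<notin> Fq" "frob (frob s) \<notin> Fq" "distinct [s, frob s, frob (frob s)]"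
proof -
  have "frob s \<noteq> s" using assms by (simp add: Fq_def)
  moreover have "frob (frob s) \<noteq> frob s" using calculation by simp
  moreover have "s \<noteq> frob (frob s)" using calculation(1) by (metis frob_frob_frob)
  ultimately show "frob s \<notin> Fq" "frob (frob s) \<notin> Fq" "distinct [s, frob s, frob (frob s)]"
    unfolding Fq_def frob_frob_frob by auto
qed

lemma conj_coeffs_rootless: "s \<notin> Fq \<Longrightarrow> conj_coeffs s \<in> Fq.rootless_cubics"
  using conj_coeffs_in_Fq conjugates_notin_Fq[of s]
  by (auto simp: Fq.rootless_cubics_def Fq.cubic_roots_def conj_coeffs_def cubic_elem_sym3)

lemma conj_coeffs_fiber:
  assumes "s \<notin> Fq"
  shows "{s' \<in> - Fq. conj_coeffs s' = conj_coeffs s} = {s, frob s, frob (frob s)}"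
proof (intro equalityI subsetI)
  fix s' assume "s' \<in> {s' \<in> - Fq. conj_coeffs s' = conj_coeffs s}"
  then have "cubic (conj_coeffs s) s' = cubic (conj_coeffs s') s'" by simp
  also have "\<dots> = 0" by (simp add: conj_coeffs_def cubic_elem_sym3)
  finally show "s' \<in> {s, frob s, frob (frob s)}" by (simp add: conj_coeffs_def cubic_elem_sym3)
next
  fix s' assume "s' \<in> {s, frob s, frob (frob s)}"
  then show "s' \<in> {s' \<in> - Fq. conj_coeffs s' = conj_coeffs s}"
    using assms conjugates_notin_Fq[OF assms] by (auto simp: conj_coeffs_frob)
qed

lemma card_compl_Fq: "card (- Fq) = 3 * card (conj_coeffs ` (- Fq))"
proof -
  have "card (- Fq) = (\<Sum>e\<in>conj_coeffs ` (- Fq). card {s \<in> - Fq. conj_coeffs s = e})"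
    unfolding card_eq_sum by (rule sum.image_gen) simp
  also have "\<dots> = (\<Sum>e\<in>conj_coeffs ` (- Fq). 3)"
  proof (intro sum.cong refl)
    fix e assume "e \<in> conj_coeffs ` (- Fq)"
    then obtain s where "s \<notin> Fq" "e = conj_coeffs s" by auto
    then show "card {s \<in> - Fq. conj_coeffs s = e} = 3"
      using conj_coeffs_fiber conjugates_notin_Fq(3) by simp
  qed
  finally show ?thesis by simp
qed

text \<open>Every cubic over \<open>F_q\<close> without roots in \<open>F_q\<close> is the minimal polynomial of an element
  outside \<open>F_q\<close>: the rootless cubics are at most \<open>(q^3 - q)/3\<close> in number, and the conjugate classes
  outside \<open>F_q\<close> give that many distinct ones.\<close>
lemma conj_coeffs_image: "conj_coeffs ` (- Fq) = Fq.rootless_cubics"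
proof (rule card_seteq)
  have "3 * card Fq.rootless_cubics = card Fq ^ 3 - card Fq" by (rule Fq.card_rootless_cubics)
  also have "\<dots> \<le> q ^ 3 - card Fq" using card_Fq_le by (intro diff_le_mono power_mono) auto
  also have "\<dots> = card (- Fq)"
    using card_UNIV card_Diff_subset[of Fq UNIV] by (simp add: Compl_eq_Diff_UNIV)
  also have "\<dots> = 3 * card (conj_coeffs ` (- Fq))" by (rule card_compl_Fq)
  finally show "card Fq.rootless_cubics \<le> card (conj_coeffs ` (- Fq))" by simp
qed (use conj_coeffs_rootless in auto)

lemma Tr3_Nm3_conj_coeffs:
  assumes "\<beta> \<in> Fq" "conj_coeffs s = (a, e, c)"
  shows "Tr3 q (s * (s + \<beta>)) + Nm3 q s = a\<^sup>2 - 2 * e + \<beta> * a + c"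
proof -
  have "frob \<beta> = \<beta>" using assms(1) by (simp add: Fq_def)
  then have "Tr3 q (s * (s + \<beta>)) + Nm3 q s
      = (s + frob s + frob (frob s))\<^sup>2 - 2 * (s * frob s + frob s * frob (frob s) + frob (frob s) * s)
        + \<beta> * (s + frob s + frob (frob s)) + s * frob s * frob (frob s)"
    unfolding Tr3_frob Nm3_frob by (simp add: frob_add frob_mult algebra_simps power2_eq_square)
  moreover have "a = s + frob s + frob (frob s)"
    and "e = s * frob s + frob s * frob (frob s) + frob (frob s) * s"
    and "c = s * frob s * frob (frob s)"
    using assms(2) by (simp_all add: conj_coeffs_def elem_sym3_def)
  ultimately show ?thesis by simp
qed

text \<open>With \<open>c\<^sub>0 = a\<^sup>2 + \<beta> a + \<gamma>\<close>, the value of the cubic \<open>(a, e, 2 e - c\<^sub>0)\<close> at \<open>2\<close> does not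
  depend on \<open>e\<close>, and each other root \<open>x\<close> determines \<open>e\<close>; so for a suitable \<open>a\<close> some \<open>e\<close> leaves
  the cubic without roots.\<close>
lemma exists_rootless_cubic:
  assumes "\<beta> \<in> Fq" "\<gamma> \<in> Fq"
  shows "\<exists>a e. (a, e, 2 * e - (a\<^sup>2 + \<beta> * a + \<gamma>)) \<in> Fq.rootless_cubics"
proof -
  have two: "(2::'a) \<in> Fq" by (rule Fq.numeral)
  obtain a where a: "a \<in> {0, 1, -1}" "a\<^sup>2 + (\<beta> - 4) * a + (8 + \<gamma>) \<noteq> 0"
    using quadratic_nonroot_among_0_1_neg1[OF two_neq_zero] by blast
  then have aFq: "a \<in> Fq" using Fq.zero Fq.one Fq.uminus by auto
  define c0 where "c0 = a\<^sup>2 + \<beta> * a + \<gamma>"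
  have cubic_eq: "cubic (a, e, 2 * e - c0) x = (x ^ 3 - a * x\<^sup>2 + c0) + e * (x - 2)" for e x
    unfolding cubic_def by (simp add: algebra_simps)
  define g where "g x = - (x ^ 3 - a * x\<^sup>2 + c0) / (x - 2)" for x
  define B where "B = {e \<in> Fq. Fq.cubic_roots (a, e, 2 * e - c0) \<noteq> {}}"
  have "B \<subseteq> g ` (Fq - {2})"
  proof
    fix e assume "e \<in> B"
    then obtain x where x: "x \<in> Fq" "cubic (a, e, 2 * e - c0) x = 0"
      unfolding B_def Fq.cubic_roots_def by auto
    have "cubic (a, e, 2 * e - c0) 2 = a\<^sup>2 + (\<beta> - 4) * a + (8 + \<gamma>)"
      unfolding cubic_eq by (simp add: c0_def algebra_simps)
    then have "x \<noteq> 2" using x(2) a(2) by auto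
    moreover have "e * (x - 2) = - (x ^ 3 - a * x\<^sup>2 + c0)"
      using x(2) unfolding cubic_eq add_eq_0_iff .
    ultimately have "e = g x" by (simp add: g_def eq_divide_eq)
    then show "e \<in> g ` (Fq - {2})" using x(1) \<open>x \<noteq> 2\<close> by auto
  qed
  then have "card B \<le> card (g ` (Fq - {2}))" using Fq.finite by (intro card_mono) auto
  also have "\<dots> \<le> card (Fq - {2})" by (rule card_image_le) (use Fq.finite in auto)
  also have "\<dots> < card Fq" using two Fq.finite by (rule card_Diff1_less[rotated])
  finally have "B \<noteq> Fq" by auto
  then obtain e where "e \<in> Fq" "e \<notin> B" unfolding B_def by auto
  moreover from this have "2 * e - c0 \<in> Fq"
    using two aFq assms unfolding c0_def by (intro Fq.diff Fq.mult Fq.add Fq.power)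
  ultimately show ?thesis using aFq unfolding Fq.rootless_cubics_def B_def c0_def by auto
qed

lemma exists_Tr3_Nm3_eq:
  assumes "\<beta> \<in> Fq" "\<gamma> \<in> Fq"
  shows "\<exists>s. s ^ q \<noteq> s \<and> Tr3 q (s * (s + \<beta>)) + Nm3 q s = - \<gamma>"
proof -
  obtain a e where "(a, e, 2 * e - (a\<^sup>2 + \<beta> * a + \<gamma>)) \<in> Fq.rootless_cubics"
    using exists_rootless_cubic[OF assms] by blast
  then obtain s where s: "s \<notin> Fq" "conj_coeffs s = (a, e, 2 * e - (a\<^sup>2 + \<beta> * a + \<gamma>))"
    unfolding conj_coeffs_image[symmetric] by auto
  have "Tr3 q (s * (s + \<beta>)) + Nm3 q s = a\<^sup>2 - 2 * e + \<beta> * a + (2 * e - (a\<^sup>2 + \<beta> * a + \<gamma>))"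
    by (rule Tr3_Nm3_conj_coeffs[OF assms(1) s(2)])
  also have "\<dots> = - \<gamma>" by (simp add: algebra_simps)
  finally show ?thesis using s(1) by (auto simp: Fq_def frob_def)
qed

end

section \<open>Determinants by masked Laplace expansion\<close>

fun remove_nth :: "nat \<Rightarrow> 'b list \<Rightarrow> 'b list" where
  "remove_nth _ [] = []"
| "remove_nth 0 (x # xs) = xs"
| "remove_nth (Suc i) (x # xs) = x # remove_nth i xs"

lemma length_remove_nth [simp]:
  "length (remove_nth i xs) = (if i < length xs then length xs - 1 else length xs)"
  by (induction i xs rule: remove_nth.induct) auto

lemma nth_remove_nth:
  "i < length xs \<Longrightarrow> k < length xs - 1 \<Longrightarrow> remove_nth i xs ! k = xs ! (if k < i then k else Suc k)"
proof (induction i xs arbitrary: k rule: remove_nth.induct)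
  case (3 i x xs)
  then show ?case by (cases k) auto
qed auto

lemma set_remove_nth: "set (remove_nth i xs) \<subseteq> set xs"
  by (induction i xs rule: remove_nth.induct) auto

lemma nth_tl_nonempty: "xs \<noteq> [] \<Longrightarrow> tl xs ! j = xs ! Suc j"
  by (cases xs) auto

lemma nth_minor_rows:
  assumes "length xs = Suc n" "\<forall>r\<in>set xs. length r = Suc n" "i < Suc n" "k < n"
  shows "map tl (remove_nth i xs) ! k ! j = xs ! (if k < i then k else Suc k) ! Suc j"
proof -
  define m where "m = (if k < i then k else Suc k)"
  have "m < length xs" using assms unfolding m_def by auto
  then have "xs ! m \<in> set xs" by (rule nth_mem)
  then have "xs ! m \<noteq> []" using assms(2) by auto
  moreover have "remove_nth i xs ! k = xs ! m" using assms unfolding m_def by (simp add: nth_remove_nth)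
  ultimately show ?thesis using assms by (simp add: nth_tl_nonempty flip: m_def)
qed

lemma length_minor_rows:
  assumes "\<forall>r\<in>set xs. length r = Suc n"
  shows "\<forall>r\<in>set (map tl (remove_nth i xs)). length r = n"
proof
  fix r assume "r \<in> set (map tl (remove_nth i xs))"
  then obtain r' where "r' \<in> set xs" "r = tl r'" using set_remove_nth by fastforce
  then show "length r = n" using assms by simp
qed

text \<open>The boolean mask marks the entries that may be
  nonzero; cofactors of masked-out entries are skipped without being evaluated, which keeps the
  symbolic expansion of a sparse matrix small.\<close>
fun masked_det :: "nat \<Rightarrow> bool list list \<Rightarrow> 'a::comm_ring_1 list list \<Rightarrow> 'a"
  and masked_det_col :: "nat \<Rightarrow> bool list list \<Rightarrow> 'a::comm_ring_1 list list \<Rightarrow> nat \<Rightarrow> nat \<Rightarrow> 'a"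
where
  "masked_det 0 ms rs = 1"
| "masked_det (Suc n) ms rs = masked_det_col n ms rs 0 (Suc n)"
| "masked_det_col n ms rs i 0 = 0"
| "masked_det_col n ms rs i (Suc k) =
     (if hd (ms ! i) then (-1) ^ i * hd (rs ! i) * masked_det n (map tl (remove_nth i ms)) (map tl (remove_nth i rs))
      else 0) + masked_det_col n ms rs (Suc i) k"

definition mask_covers :: "nat \<Rightarrow> bool list list \<Rightarrow> 'a::zero list list \<Rightarrow> bool" where
  "mask_covers n ms rs \<longleftrightarrow> length rs = n \<and> length ms = n \<and> (\<forall>r\<in>set rs. length r = n)
     \<and> (\<forall>r\<in>set ms. length r = n) \<and> (\<forall>i<n. \<forall>j<n. \<not> ms ! i ! j \<longrightarrow> rs ! i ! j = 0)"

lemma mask_covers_minor: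
  assumes cov: "mask_covers (Suc n) ms rs" and i: "i < Suc n"
  shows "mask_covers n (map tl (remove_nth i ms)) (map tl (remove_nth i rs))"
  unfolding mask_covers_def
proof (intro conjI allI impI)
  show "length (map tl (remove_nth i rs)) = n" "length (map tl (remove_nth i ms)) = n"
    using cov i by (simp_all add: mask_covers_def)
  show "\<forall>r\<in>set (map tl (remove_nth i rs)). length r = n"
    using cov unfolding mask_covers_def by (intro length_minor_rows) simp
  show "\<forall>r\<in>set (map tl (remove_nth i ms)). length r = n"
    using cov unfolding mask_covers_def by (intro length_minor_rows) simp
next
  fix k j assume kj: "k < n" "j < n" "\<not> map tl (remove_nth i ms) ! k ! j"
  let ?m = "if k < i then k else Suc k"
  have "\<not> ms ! ?m ! Suc j"
    using kj i nth_minor_rows[of ms n i k j] cov unfolding mask_covers_def by simp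
  moreover have "?m < Suc n" using kj by simp
  ultimately have "rs ! ?m ! Suc j = 0" using cov kj unfolding mask_covers_def by blast
  then show "map tl (remove_nth i rs) ! k ! j = 0"
    using kj i nth_minor_rows[of rs n i k j] cov unfolding mask_covers_def by simp
qed

lemma masked_det_col_eq_sum:
  "masked_det_col n ms rs i k = (\<Sum>j = i..<i + k. if hd (ms ! j)
     then (-1) ^ j * hd (rs ! j) * masked_det n (map tl (remove_nth j ms)) (map tl (remove_nth j rs)) else 0)"
  by (induction k arbitrary: i) (simp_all add: sum.atLeast_Suc_lessThan)

theorem det_mat_of_rows_list_masked_det:
  fixes rs :: "'a::comm_ring_1 list list"
  shows "mask_covers n ms rs \<Longrightarrow> det (mat_of_rows_list n rs) = masked_det n ms rs"
proof (induction n arbitrary: ms rs)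
  case 0
  then show ?case by (simp add: mask_covers_def mat_of_rows_list_def)
next
  case (Suc n)
  let ?A = "mat_of_rows_list (Suc n) rs"
  have A: "?A \<in> carrier_mat (Suc n) (Suc n)"
    using Suc.prems unfolding mask_covers_def mat_of_rows_list_def by auto
  have "det ?A = (\<Sum>i<Suc n. ?A $$ (i, 0) * cofactor ?A i 0)"
    by (rule laplace_expansion_column[OF A]) simp
  also have "\<dots> = masked_det (Suc n) ms rs"
    unfolding masked_det.simps masked_det_col_eq_sum
  proof (rule sum.cong)
    fix i assume i: "i \<in> {0..<0 + Suc n}"
    have len: "length rs = Suc n" "length (rs ! i) = Suc n" "length (ms ! i) = Suc n"
      using Suc.prems i unfolding mask_covers_def by auto
    have "rs ! i \<noteq> []" using len(2) by auto
    then have entry: "?A $$ (i, 0) = hd (rs ! i)"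
      using i len by (simp add: mat_of_rows_list_def hd_conv_nth)
    have "mat_delete ?A i 0 = mat_of_rows_list n (map tl (remove_nth i rs))"
    proof (rule eq_matI)
      fix k j assume "k < dim_row (mat_of_rows_list n (map tl (remove_nth i rs)))"
        "j < dim_col (mat_of_rows_list n (map tl (remove_nth i rs)))"
      then have kj: "k < n" "j < n" using len i by (simp_all add: mat_of_rows_list_def)
      have "\<forall>r\<in>set rs. length r = Suc n" using Suc.prems by (simp add: mask_covers_def)
      then have "map tl (remove_nth i rs) ! k ! j = rs ! (if k < i then k else Suc k) ! Suc j"
        using kj len i by (intro nth_minor_rows) auto
      moreover have "(if k < i then k else Suc k) < Suc n" using kj by simp
      ultimately show "mat_delete ?A i 0 $$ (k, j) = mat_of_rows_list n (map tl (remove_nth i rs)) $$ (k, j)"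
        using kj len i by (simp add: mat_delete_def mat_of_rows_list_def)
    qed (use len i in \<open>simp_all add: mat_of_rows_list_def\<close>)
    moreover have "det (mat_of_rows_list n (map tl (remove_nth i rs)))
        = masked_det n (map tl (remove_nth i ms)) (map tl (remove_nth i rs))"
      using i by (intro Suc.IH mask_covers_minor[OF Suc.prems]) auto
    ultimately have cof: "cofactor ?A i 0 = (-1) ^ i * masked_det n (map tl (remove_nth i ms)) (map tl (remove_nth i rs))"
      by (simp add: cofactor_def)
    have masked_zero: "hd (rs ! i) = 0" if "\<not> hd (ms ! i)"
    proof -
      have "ms ! i \<noteq> []" using len(3) by auto
      then have "\<not> ms ! i ! 0" using that by (simp add: hd_conv_nth)
      moreover have "\<forall>i<Suc n. \<forall>j<Suc n. \<not> ms ! i ! j \<longrightarrow> rs ! i ! j = 0"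
        using Suc.prems by (simp add: mask_covers_def)
      ultimately have "rs ! i ! 0 = 0" using i by simp
      then show ?thesis using \<open>rs ! i \<noteq> []\<close> by (simp add: hd_conv_nth)
    qed
    show "?A $$ (i, 0) * cofactor ?A i 0 = (if hd (ms ! i)
        then (-1) ^ i * hd (rs ! i) * masked_det n (map tl (remove_nth i ms)) (map tl (remove_nth i rs)) else 0)"
      unfolding entry cof using masked_zero by (simp only: mult.left_commute mult.assoc if_split) simp
  qed (simp add: lessThan_atLeast0)
  finally show ?case .
qed

section \<open>The characteristic polynomial of \<open>D\<close>\<close>

text \<open>The rows of \<open>x 1 - D\<close>, with \<open>t^q, t^(q^2), s^q, s^(q^2), s^(1+q+q^2)\<close> replaced by
  independent variables \<open>t1, t2, s1, s2, n\<close>.\<close>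
definition char_rows :: "'a::comm_ring_1 \<Rightarrow> 'a \<Rightarrow> 'a \<Rightarrow> 'a \<Rightarrow> 'a \<Rightarrow> 'a \<Rightarrow> 'a \<Rightarrow> 'a \<Rightarrow> 'a list list" where
  "char_rows x t t1 t2 s s1 s2 n =
    [[x + t, n + s2 * t1 + t2 * s, - (s * s1 + t1), t2, s, - s2, -1, 0],
     [1, x, 0, 0, 0, 0, 0, 0],
     [0, s1 * s2 + t2, x - s1, 0, 1, 0, 0, 0],
     [0, s2, -1, x, 0, 0, 0, 0],
     [0, t1, 0, - s1, x, -1, 0, 0],
     [0, s, 0, 1, 0, x, 0, 0],
     [0, t, 0, 0, 0, 0, x, 1],
     [0, -1, 0, 0, 0, 0, 0, x]]"

definition char_rows_mask :: "bool list list" where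
  "char_rows_mask =
    [[True, True, True, True, True, True, True, False],
     [True, True, False, False, False, False, False, False],
     [False, True, True, False, True, False, False, False],
     [False, True, True, True, False, False, False, False],
     [False, True, False, True, True, True, False, False],
     [False, True, False, True, False, True, False, False],
     [False, True, False, False, False, False, True, True],
     [False, True, False, False, False, False, False, True]]"

lemma mask_covers_char_rows: "mask_covers 8 char_rows_mask (char_rows x t t1 t2 s s1 s2 n)"
  unfolding mask_covers_def char_rows_mask_def char_rows_def
  by (auto simp: less_Suc_eq numeral_eq_Suc)

definition palindromic8 :: "'a::comm_ring_1 \<Rightarrow> 'a \<Rightarrow> 'a \<Rightarrow> 'a" where
  "palindromic8 u h x = x ^ 8 + u * x ^ 7 - h * x ^ 6 - (u + u\<^sup>2) * x ^ 5 + (2 * h + 2 * u\<^sup>2 - 2) * x ^ 4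
     - (u + u\<^sup>2) * x ^ 3 - h * x\<^sup>2 + u * x + 1"

lemma det_char_rows_conjugates:
  "det (mat_of_rows_list 8 (char_rows x (s1 + u) (s2 + u) (s + u) s s1 s2 (s * s1 * s2))) =
   palindromic8 u (s * (s + u) + s1 * (s1 + u) + s2 * (s2 + u) + s * s1 * s2) x"
proof -
  have eight: "(8::nat) = Suc (Suc (Suc (Suc (Suc (Suc (Suc (Suc 0)))))))" by simp
  have "det (mat_of_rows_list 8 (char_rows x (s1 + u) (s2 + u) (s + u) s s1 s2 (s * s1 * s2)))
      = masked_det 8 char_rows_mask (char_rows x (s1 + u) (s2 + u) (s + u) s s1 s2 (s * s1 * s2))"
    by (rule det_mat_of_rows_list_masked_det[OF mask_covers_char_rows])
  also have "\<dots> = palindromic8 u (s * (s + u) + s1 * (s1 + u) + s2 * (s2 + u) + s * s1 * s2) x"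
    unfolding char_rows_mask_def char_rows_def eight
    by (simp only: masked_det.simps nth_Cons_0 nth_Cons_Suc list.sel remove_nth.simps list.map
        if_True if_False mult_zero_left mult_zero_right add_0_left add_0_right power_0 power_Suc
        mult_1_left mult_1_right)
      (simp add: palindromic8_def algebra_simps numeral_eq_Suc power_Suc)
  finally show ?thesis .
qed

lemma index_mat_of_rows_list:
  "i < length rs \<Longrightarrow> j < n \<Longrightarrow> mat_of_rows_list n rs $$ (i, j) = rs ! i ! j"
  by (simp add: mat_of_rows_list_def)

lemma Dmat_carrier: "Dmat q t s \<in> carrier_mat 8 8"
  unfolding carrier_mat_def Dmat_def mat_of_rows_list_def
  by (simp only: mem_Collect_eq dim_row_mat dim_col_mat list.size) simp

lemma less_8_cases: "(i::nat) < 8 \<Longrightarrow> i = 0 \<or> i = 1 \<or> i = 2 \<or> i = 3 \<or> i = 4 \<or> i = 5 \<or> i = 6 \<or> i = 7"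
  by auto

lemma char_rows_Dmat_entry:
  assumes "i < 8" "j < 8"
  shows "(if i = j then x else 0) - Dmat q t s $$ (i, j)
    = char_rows x t (t ^ q) (t ^ q\<^sup>2) s (s ^ q) (s ^ q\<^sup>2) (s ^ (1 + q + q\<^sup>2)) ! i ! j"
  unfolding Dmat_def using assms less_8_cases[OF assms(1)] less_8_cases[OF assms(2)]
  by (elim disjE) (simp_all add: index_mat_of_rows_list char_rows_def power_add)

lemma poly_char_poly_Dmat:
  "poly (char_poly (Dmat q t s)) x =
     det (mat_of_rows_list 8 (char_rows x t (t ^ q) (t ^ q\<^sup>2) s (s ^ q) (s ^ q\<^sup>2) (s ^ (1 + q + q\<^sup>2))))"
proof -
  let ?R = "char_rows x t (t ^ q) (t ^ q\<^sup>2) s (s ^ q) (s ^ q\<^sup>2) (s ^ (1 + q + q\<^sup>2))"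
  have len: "length ?R = 8" by (simp add: char_rows_def)
  have "- char_matrix (Dmat q t s) x = mat_of_rows_list 8 ?R"
  proof (rule eq_matI)
    fix i j assume "i < dim_row (mat_of_rows_list 8 ?R)" "j < dim_col (mat_of_rows_list 8 ?R)"
    then have ij: "i < 8" "j < 8" using len by (simp_all add: mat_of_rows_list_def)
    have "(- char_matrix (Dmat q t s) x) $$ (i, j) = (if i = j then x else 0) - Dmat q t s $$ (i, j)"
      using ij Dmat_carrier[of q t s] by (simp add: char_matrix_def)
    also have "\<dots> = ?R ! i ! j" by (rule char_rows_Dmat_entry[OF ij])
    also have "\<dots> = mat_of_rows_list 8 ?R $$ (i, j)" using ij len by (simp add: index_mat_of_rows_list)
    finally show "(- char_matrix (Dmat q t s) x) $$ (i, j) = mat_of_rows_list 8 ?R $$ (i, j)" .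
  qed (use Dmat_carrier[of q t s] len in \<open>simp_all add: char_matrix_def mat_of_rows_list_def\<close>)
  then show ?thesis by (simp add: char_poly_matrix[OF Dmat_carrier])
qed

lemma degree_f3: "degree (f3 q (\<alpha>::'a::field)) = 8"
  by (simp add: f3_def degree_mult_eq degree_power_eq del: mult_pCons_left mult_pCons_right)

lemma palindromic8_factorization:
  "(x - 1)\<^sup>2 * (x ^ 3 - e1 * x\<^sup>2 + e2 * x - 1) * (x ^ 3 - e2 * x\<^sup>2 + e1 * x - 1) =
   palindromic8 (- (e1 + e2 + 2)) (- (e1 * e2 + 3 * e1 + 3 * e2 + 1)) x"
  unfolding palindromic8_def by (simp add: algebra_simps numeral_eq_Suc power_Suc)

context field_q3
begin

lemma poly_f3:
  assumes "\<alpha> ^ (q\<^sup>2 + q + 1) = 1"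
  defines "e1 \<equiv> \<alpha> + frob \<alpha> + frob (frob \<alpha>)"
    and "e2 \<equiv> \<alpha> * frob \<alpha> + frob \<alpha> * frob (frob \<alpha>) + frob (frob \<alpha>) * \<alpha>"
  shows "poly (f3 q \<alpha>) x = palindromic8 (- (e1 + e2 + 2)) (- (e1 * e2 + 3 * e1 + 3 * e2 + 1)) x"
proof -
  let ?y = "frob \<alpha>" and ?w = "frob (frob \<alpha>)"
  have norm: "\<alpha> * ?y * ?w = 1"
    using assms(1) Nm3_frob[of \<alpha>] by (simp add: Nm3_def ac_simps)
  have powers: "\<alpha> ^ q = ?y" "\<alpha> ^ (q + 1) = \<alpha> * ?y" by (simp_all add: frob_def)
  have inverses: "inverse \<alpha> = ?y * ?w" "inverse ?y = \<alpha> * ?w" "inverse (\<alpha> * ?y) = ?w"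
    by (rule inverse_unique, use norm in \<open>simp add: ac_simps\<close>)+
  have linear: "poly [:- c, 1:] x = x - c" for c by simp
  have "poly (f3 q \<alpha>) x = (x - 1)\<^sup>2 * (x - \<alpha>) * (x - inverse \<alpha>) * (x - \<alpha> ^ q)
      * (x - inverse (\<alpha> ^ q)) * (x - \<alpha> ^ (q + 1)) * (x - inverse (\<alpha> ^ (q + 1)))"
    unfolding f3_def by (simp only: poly_mult poly_power linear)
  also have "\<dots> = (x - 1)\<^sup>2 * ((x - \<alpha>) * (x - ?y) * (x - ?w))
      * ((x - ?y * ?w) * (x - \<alpha> * ?w) * (x - \<alpha> * ?y))"
    unfolding powers inverses by (simp only: ac_simps)
  also have "\<dots> = (x - 1)\<^sup>2 * (x ^ 3 - e1 * x\<^sup>2 + e2 * x - \<alpha> * ?y * ?w)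
      * (x ^ 3 - e2 * x\<^sup>2 + (\<alpha> * ?y * ?w) * e1 * x - (\<alpha> * ?y * ?w)\<^sup>2)"
    unfolding e1_def e2_def by (simp add: algebra_simps power2_eq_square power3_eq_cube)
  finally show ?thesis unfolding norm by (simp add: palindromic8_factorization)
qed

lemma exists_char_poly_Dmat_eq_f3:
  fixes \<alpha> :: 'a
  assumes "\<alpha> ^ (q\<^sup>2 + q + 1) = 1"
  shows "\<exists>t s. char_poly (Dmat q t s) = f3 q \<alpha>"
proof -
  define e1 where "e1 = \<alpha> + frob \<alpha> + frob (frob \<alpha>)"
  define e2 where "e2 = \<alpha> * frob \<alpha> + frob \<alpha> * frob (frob \<alpha>) + frob (frob \<alpha>) * \<alpha>"
  define u where "u = - (e1 + e2 + 2)"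
  have "(e1, e2, \<alpha> * frob \<alpha> * frob (frob \<alpha>)) \<in> Fq \<times> Fq \<times> Fq"
    using conj_coeffs_in_Fq[of \<alpha>] by (simp add: conj_coeffs_def elem_sym3_def e1_def e2_def)
  then have e: "e1 \<in> Fq" "e2 \<in> Fq" by auto
  have u: "u \<in> Fq" unfolding u_def using e by (blast intro: Fq.add Fq.uminus Fq.numeral)
  have g: "e1 * e2 + 3 * e1 + 3 * e2 + 1 \<in> Fq"
    using e by (blast intro: Fq.add Fq.mult Fq.one Fq.numeral)
  obtain s where s: "Tr3 q (s * (s + u)) + Nm3 q s = - (e1 * e2 + 3 * e1 + 3 * e2 + 1)"
    using exists_Tr3_Nm3_eq[OF u g] by blast
  have frob_u: "frob u = u" using u by (simp add: Fq_def)
  \<comment> \<open>With \<open>t = s^q + u\<close> the characteristic polynomial depends on \<open>s\<close> only through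
    \<open>T(s(s + u)) + N(s)\<close>.\<close>
  define t where "t = frob s + u"
  have t_powers: "t ^ q = frob (frob s) + u" "t ^ q\<^sup>2 = s + u"
    unfolding t_def power_q_squared by (simp_all add: frob_def[symmetric] frob_add frob_u)
  have s_powers: "s ^ q = frob s" "s ^ q\<^sup>2 = frob (frob s)" "s ^ (1 + q + q\<^sup>2) = s * frob s * frob (frob s)"
    using Nm3_frob[of s] by (simp_all add: frob_def power_q_squared Nm3_def)
  have trace_norm: "s * (s + u) + frob s * (frob s + u) + frob (frob s) * (frob (frob s) + u)
      + s * frob s * frob (frob s) = - (e1 * e2 + 3 * e1 + 3 * e2 + 1)"
    using s unfolding Tr3_frob Nm3_frob by (simp add: frob_add frob_mult frob_u)
  have "poly (char_poly (Dmat q t s)) x = poly (f3 q \<alpha>) x" for x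
  proof -
    have "poly (char_poly (Dmat q t s)) x = det (mat_of_rows_list 8 (char_rows x (frob s + u)
        (frob (frob s) + u) (s + u) s (frob s) (frob (frob s)) (s * frob s * frob (frob s))))"
      unfolding poly_char_poly_Dmat t_powers s_powers by (simp only: t_def)
    also have "\<dots> = palindromic8 u (- (e1 * e2 + 3 * e1 + 3 * e2 + 1)) x"
      unfolding det_char_rows_conjugates trace_norm ..
    also have "\<dots> = poly (f3 q \<alpha>) x"
      unfolding poly_f3[OF assms, folded e1_def e2_def] u_def ..
    finally show ?thesis .
  qed
  moreover have "degree (char_poly (Dmat q t s)) = 8"
    using degree_monic_char_poly[OF Dmat_carrier[of q t s]] by simp
  moreover have "8 < card (UNIV :: 'a set)"
    using card_UNIV power_mono[OF q_ge_3, of 3] by simp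
  ultimately have "char_poly (Dmat q t s) = f3 q \<alpha>"
    by (intro poly_eqI_degree[of UNIV]) (simp_all add: degree_f3)
  then show ?thesis by blast
qed

end

theorem mainTheorem14:
  fixes q :: nat
  assumes "odd q"
    and "card (UNIV :: 'a::{finite,field} set) = q ^ 3"
  shows "(\<forall>\<beta> \<gamma> :: 'a. \<beta> ^ q = \<beta> \<longrightarrow> \<gamma> ^ q = \<gamma> \<longrightarrow>
            (\<exists>s :: 'a. s ^ q \<noteq> s \<and> Tr3 q (s * (s + \<beta>)) + Nm3 q s = - \<gamma>))
       \<and> (\<forall>\<alpha> :: 'a. \<alpha> ^ (q ^ 2 + q + 1) = 1 \<longrightarrow>
            (\<forall>k. 0 < k \<and> k < q ^ 2 + q + 1 \<longrightarrow> \<alpha> ^ k \<noteq> 1) \<longrightarrow>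
            (\<exists>t0 s0 :: 'a. char_poly (Dmat q t0 s0) = f3 q \<alpha>))"
proof -
  \<comment> \<open>Only \<open>\<alpha>^(q^2+q+1) = 1\<close> is needed.\<close>
  interpret field_q3 q by unfold_locales (use assms in auto)
  show ?thesis
    using exists_Tr3_Nm3_eq exists_char_poly_Dmat_eq_f3 by (auto simp: Fq_def frob_def)
qed

end
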